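(* Let $G_n$ be the $n\times n$ honeycomb lattice embedded in a torus, and consider the set $\Omega$ of configurations of the 1-2 model on $G_n$, i.e. edge subsets $X$ such that every vertex is incident to exactly one or exactly two edges of $X$. Then any two elements of $\Omega$ can be connected by a finite sequence of elements of $\Omega$ in which consecutive elements differ by adding or deleting a single edge. Consequently the Markov chain on $\Omega$ that moves from $X$ to each such neighbour with positive probability (and stays put otherwise), as used for Glauber dynamics of the 1-2 model with signature $(0,c,b,a,a,b,c,0)$, $a,b,c>0$, is irreducible.
   Context: The 1-2 model is the vertex model on the honeycomb lattice whose signature at every vertex is $(0,c,b,a,a,b,c,0)$, indexed by the local configurations $000,001,\dots,111$ of the incident $(a,b,c)$-edges, with $a,b,c>0$; so the allowed configurations are exactly those with one or two edges present at each vertex. *)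

theory Defs
  imports Complex_Main
begin

text \<open>An edge is identified by its black endpoint and its type, so that the edge set
is a set of 3n^2 distinct edges even for small n (where parallel edges occur).\<close>

datatype vtx = Black nat nat | White nat nat
datatype etype = EA | EB | EC

type_synonym edge = "nat \<times> nat \<times> etype"

definition hc_vertices :: "nat \<Rightarrow> vtx set" where
  "hc_vertices n = {Black i j | i j. i < n \<and> j < n} \<union> {White i j | i j. i < n \<and> j < n}"

definition hc_edges :: "nat \<Rightarrow> edge set" where
  "hc_edges n = {(i, j, t) | i j t. i < n \<and> j < n}"

fun white_end :: "nat \<Rightarrow> edge \<Rightarrow> vtx" where
  "white_end n (i, j, EA) = White i j"
| "white_end n (i, j, EB) = White ((i + 1) mod n) j"
| "white_end n (i, j, EC) = White i ((j + 1) mod n)"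

definition hc_ends :: "nat \<Rightarrow> edge \<Rightarrow> vtx set" where
  "hc_ends n e = {Black (fst e) (fst (snd e)), white_end n e}"

definition hc_deg :: "nat \<Rightarrow> edge set \<Rightarrow> vtx \<Rightarrow> nat" where
  "hc_deg n X v = card {e \<in> X. v \<in> hc_ends n e}"

definition one_two_configs :: "nat \<Rightarrow> edge set set" where
  "one_two_configs n = {X. X \<subseteq> hc_edges n \<and>
      (\<forall>v \<in> hc_vertices n. hc_deg n X v = 1 \<or> hc_deg n X v = 2)}"

definition one_edge_apart :: "nat \<Rightarrow> edge set \<Rightarrow> edge set \<Rightarrow> bool" where
  "one_edge_apart n X Y \<longleftrightarrow> (\<exists>e \<in> hc_edges n. Y = X \<union> {e} \<and> e \<notin> X \<or> Y = X - {e} \<and> e \<in> X)"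

end

theory Submission
  imports Defs
begin

text \<open>
  Let \<open>A\<close> be the set of all a-edges, a perfect matching of the
  honeycomb torus. We show that every configuration
  \<open>X \<noteq> A\<close> has a neighbour in \<Omega> strictly closer to \<open>A\<close>, measured by the size of the
  symmetric difference \<open>X \<triangle> A\<close>. The only candidate moves are deleting a non-a edge
  of \<open>X\<close> whose two endpoints have degree 2, or adding a missing a-edge whose two
  endpoints have degree 1. If neither move is possible ("blocked" configuration),
  a double counting shows \<open>X = A\<close>: the set \<open>C\<close> of degree-2 vertices whose a-edge
  is missing injects, twice over, into the set \<open>L\<close> of degree-1 vertices whose
  a-edge is missing, while \<open>L\<close> injects into \<open>C\<close> via the a-partner; so \<open>C = {}\<close>,
  which forces \<open>A \<subseteq> X\<close> and then \<open>X \<subseteq> A\<close>.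
\<close>

definition black_end :: "edge \<Rightarrow> vtx" where
  "black_end e = Black (fst e) (fst (snd e))"

text \<open>The endpoint of \<open>e\<close> different from \<open>u\<close> (meaningful when \<open>u\<close> is an endpoint).\<close>
definition opp :: "nat \<Rightarrow> vtx \<Rightarrow> edge \<Rightarrow> vtx" where
  "opp n u e = (if u = black_end e then white_end n e else black_end e)"

lemma black_end_ne_white_end: "black_end e \<noteq> white_end n e"
  by (cases e; cases "snd (snd e)") (auto simp: black_end_def)

lemma ends_opp:
  assumes "u \<in> hc_ends n e"
  shows "hc_ends n e = {u, opp n u e}" "opp n u e \<noteq> u" "opp n (opp n u e) e = u"
  using assms black_end_ne_white_end[of e n]
  unfolding hc_ends_def opp_def black_end_def[symmetric] by auto

lemma ends_in_vertices:
  assumes "n \<ge> 1" "e \<in> hc_edges n"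
  shows "hc_ends n e \<subseteq> hc_vertices n"
proof -
  obtain i j t where "e = (i, j, t)" "i < n" "j < n"
    using assms(2) by (auto simp: hc_edges_def)
  with assms(1) show ?thesis by (cases t) (auto simp: hc_ends_def hc_vertices_def)
qed

lemma finite_hc_edges: "finite (hc_edges n)"
proof -
  have types: "(UNIV :: etype set) = {EA, EB, EC}" using etype.exhaust by blast
  have "hc_edges n = {..<n} \<times> {..<n} \<times> UNIV" by (auto simp: hc_edges_def)
  then show ?thesis by (simp add: types)
qed

lemma finite_hc_vertices: "finite (hc_vertices n)"
  unfolding hc_vertices_def by (simp add: finite_image_set2)

section \<open>The perfect matching of a-edges\<close>

fun a_edge :: "vtx \<Rightarrow> edge" where
  "a_edge (Black i j) = (i, j, EA)"
| "a_edge (White i j) = (i, j, EA)"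

fun partner :: "vtx \<Rightarrow> vtx" where
  "partner (Black i j) = White i j"
| "partner (White i j) = Black i j"

definition a_edges :: "nat \<Rightarrow> edge set" where
  "a_edges n = {e \<in> hc_edges n. snd (snd e) = EA}"

lemma a_edge_type [simp]: "snd (snd (a_edge v)) = EA"
  by (cases v) auto

lemma a_edge_facts:
  assumes "v \<in> hc_vertices n"
  shows "a_edge v \<in> a_edges n" "hc_ends n (a_edge v) = {v, partner v}"
    "partner v \<in> hc_vertices n" "a_edge (partner v) = a_edge v"
  using assms by (auto simp: hc_vertices_def a_edges_def hc_edges_def hc_ends_def)

lemma a_edge_unique:
  assumes "snd (snd e) = EA" "u \<in> hc_ends n e"
  shows "e = a_edge u"
  using assms by (cases e) (auto simp: hc_ends_def)

lemma inj_partner: "inj partner"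
  by (rule injI) (case_tac x; case_tac y; auto)

lemma deg_remove:
  assumes "f \<in> X" "finite X"
  shows "hc_deg n (X - {f}) v = (if v \<in> hc_ends n f then hc_deg n X v - 1 else hc_deg n X v)"
proof -
  have "{e \<in> X - {f}. v \<in> hc_ends n e} = {e \<in> X. v \<in> hc_ends n e} - {f}" by auto
  then show ?thesis using assms unfolding hc_deg_def by auto
qed

lemma deg_insert:
  assumes "f \<notin> X" "finite X"
  shows "hc_deg n (insert f X) v =
           (if v \<in> hc_ends n f then Suc (hc_deg n X v) else hc_deg n X v)"
proof -
  have "{e \<in> insert f X. v \<in> hc_ends n e} = (if v \<in> hc_ends n f
          then insert f {e \<in> X. v \<in> hc_ends n e} else {e \<in> X. v \<in> hc_ends n e})"
    by auto
  then show ?thesis using assms unfolding hc_deg_def by auto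
qed

lemma deg_ge2:
  assumes "f \<in> X" "g \<in> X" "f \<noteq> g" "v \<in> hc_ends n f" "v \<in> hc_ends n g" "finite X"
  shows "hc_deg n X v \<ge> 2"
proof -
  have "card {f, g} \<le> hc_deg n X v"
    unfolding hc_deg_def by (rule card_mono) (use assms in auto)
  then show ?thesis using assms(3) by simp
qed

lemma deg1_unique_edge:
  assumes "hc_deg n X w = 1" "f \<in> X" "w \<in> hc_ends n f" "g \<in> X" "w \<in> hc_ends n g"
  shows "f = g"
proof -
  obtain h where "{e \<in> X. w \<in> hc_ends n e} = {h}"
    using assms(1) unfolding hc_deg_def by (auto simp: card_1_singleton_iff)
  moreover have "f \<in> {e \<in> X. w \<in> hc_ends n e}" "g \<in> {e \<in> X. w \<in> hc_ends n e}"
    using assms(2-5) by simp_all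
  ultimately show ?thesis by simp
qed

lemma config_facts:
  assumes "X \<in> one_two_configs n"
  shows "X \<subseteq> hc_edges n" "finite X"
    "\<And>v. v \<in> hc_vertices n \<Longrightarrow> hc_deg n X v = 1 \<or> hc_deg n X v = 2"
  using assms finite_subset[OF _ finite_hc_edges] by (auto simp: one_two_configs_def)

section \<open>Blocked configurations are the a-matching\<close>

context
  fixes n :: nat and X :: "edge set"
  assumes n1: "n \<ge> 1"
    and config: "X \<in> one_two_configs n"
    and removal_blocked: "\<And>f. f \<in> X \<Longrightarrow> snd (snd f) \<noteq> EA \<Longrightarrow>
                              \<exists>v \<in> hc_ends n f. hc_deg n X v = 1"
    and addition_blocked: "\<And>v. v \<in> hc_vertices n \<Longrightarrow> a_edge v \<notin> X \<Longrightarrow>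
                              hc_deg n X v = 2 \<or> hc_deg n X (partner v) = 2"
begin

private abbreviation (input) "deg \<equiv> hc_deg n X"

private definition "C = {v \<in> hc_vertices n. deg v = 2 \<and> a_edge v \<notin> X}"
private definition "L = {u \<in> hc_vertices n. deg u = 1 \<and> a_edge u \<notin> X}"

private lemma finite_C: "finite C" and finite_L: "finite L"
  using finite_hc_vertices by (auto simp: C_def L_def)

text \<open>The partner of a vertex of \<open>L\<close> lies in \<open>C\<close>, since the a-edge cannot be added.\<close>
private lemma card_L_le_C: "card L \<le> card C"
proof (rule card_inj_on_le[OF inj_on_subset[OF inj_partner] _ finite_C])
  show "partner ` L \<subseteq> C"
  proof
    fix x assume "x \<in> partner ` L"
    then obtain u where u: "u \<in> L" "x = partner u" by blast
    then have uV: "u \<in> hc_vertices n" and "deg u = 1" "a_edge u \<notin> X" by (auto simp: L_def)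
    then have "deg (partner u) = 2" using addition_blocked[OF uV] by simp
    then show "x \<in> C" using u uV a_edge_facts[OF uV] \<open>a_edge u \<notin> X\<close> by (auto simp: C_def)
  qed
qed simp

text \<open>Each edge of \<open>X\<close> at a vertex of \<open>C\<close> is a non-a edge, so its far endpoint
  has degree 1; that endpoint lies in \<open>L\<close> and determines the edge.\<close>
private lemma opp_in_L:
  assumes v: "v \<in> C" and f: "f \<in> X" "v \<in> hc_ends n f"
  shows "opp n v f \<in> L"
proof -
  let ?w = "opp n v f"
  have fE: "f \<in> hc_edges n" and finX: "finite X" using f config_facts[OF config] by auto
  have "snd (snd f) \<noteq> EA" using a_edge_unique[of f v n] v f by (auto simp: C_def)
  then obtain u where "u \<in> hc_ends n f" "deg u = 1" using removal_blocked f by blast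
  then have w1: "deg ?w = 1" using ends_opp[OF f(2)] v by (auto simp: C_def)
  have w_end: "?w \<in> hc_ends n f" using ends_opp[OF f(2)] by auto
  then have wV: "?w \<in> hc_vertices n" using ends_in_vertices[OF n1 fE] by blast
  have "a_edge ?w \<notin> X"
  proof
    assume "a_edge ?w \<in> X"
    moreover have "a_edge ?w \<noteq> f" using \<open>snd (snd f) \<noteq> EA\<close> a_edge_type by metis
    ultimately have "deg ?w \<ge> 2"
      using deg_ge2 f(1) w_end a_edge_facts(2)[OF wV] finX by blast
    then show False using w1 by simp
  qed
  then show ?thesis using wV w1 by (simp add: L_def)
qed

text \<open>Double counting: a vertex of \<open>C\<close> has two incident edges of \<open>X\<close>, and the far
  endpoints of all these edges are distinct elements of \<open>L\<close>.\<close>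
private lemma twice_card_C_le_L: "2 * card C \<le> card L"
proof -
  define P where "P = Sigma C (\<lambda>v. {f \<in> X. v \<in> hc_ends n f})"
  have finX: "finite X" using config_facts[OF config] by auto
  have "card P = (\<Sum>v\<in>C. deg v)"
    unfolding P_def hc_deg_def using finite_C finX by (simp add: card_SigmaI)
  also have "\<dots> = 2 * card C" by (simp add: C_def)
  finally have cardP: "card P = 2 * card C" .
  have "inj_on (\<lambda>(v, f). opp n v f) P"
  proof (rule inj_onI, clarify)
    fix v f v' f' assume p: "(v, f) \<in> P" "(v', f') \<in> P" and eq: "opp n v f = opp n v' f'"
    then have w1: "deg (opp n v f) = 1" using opp_in_L by (auto simp: P_def L_def)
    have "f = f'"
      using deg1_unique_edge[OF w1] p eq ends_opp[of v n f] ends_opp[of v' n f']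
      by (auto simp: P_def)
    moreover have "v = opp n (opp n v f) f" "v' = opp n (opp n v' f') f'"
      using p ends_opp(3) by (auto simp: P_def)
    ultimately show "v = v' \<and> f = f'" using eq by simp
  qed
  moreover have "(\<lambda>(v, f). opp n v f) ` P \<subseteq> L" using opp_in_L by (auto simp: P_def)
  ultimately have "card P \<le> card L" using card_inj_on_le finite_L by blast
  then show ?thesis using cardP by simp
qed

private lemma C_empty: "C = {}"
proof -
  have "card C = 0" using card_L_le_C twice_card_C_le_L by linarith
  then show ?thesis using finite_C by simp
qed

lemma blocked_is_a_edges: "X = a_edges n"
proof
  have finX: "finite X" and XE: "X \<subseteq> hc_edges n" using config_facts[OF config] by auto
  show AX: "a_edges n \<subseteq> X"
  proof
    fix e assume e: "e \<in> a_edges n"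
    then obtain i j where ij: "e = (i, j, EA)" "i < n" "j < n"
      by (auto simp: a_edges_def hc_edges_def)
    let ?v = "Black i j"
    have vV: "?v \<in> hc_vertices n" using ij by (auto simp: hc_vertices_def)
    show "e \<in> X"
    proof (rule ccontr)
      assume "e \<notin> X"
      then have "?v \<in> C \<or> partner ?v \<in> C"
        using addition_blocked[OF vV] a_edge_facts[OF vV] vV ij by (auto simp: C_def)
      then show False using C_empty by blast
    qed
  qed
  show "X \<subseteq> a_edges n"
  proof
    fix f assume fX: "f \<in> X"
    show "f \<in> a_edges n"
    proof (rule ccontr)
      assume "f \<notin> a_edges n"
      then have fA: "snd (snd f) \<noteq> EA" using fX XE by (auto simp: a_edges_def)
      then obtain w where w: "w \<in> hc_ends n f" "deg w = 1" using removal_blocked fX by blast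
      have wV: "w \<in> hc_vertices n" using w ends_in_vertices[OF n1] XE fX by blast
      have "a_edge w \<in> X" "a_edge w \<noteq> f"
        using AX a_edge_facts[OF wV] fA by auto
      then have "deg w \<ge> 2" using deg_ge2 fX w a_edge_facts(2)[OF wV] finX by blast
      then show False using w by simp
    qed
  qed
qed

end

section \<open>Moving towards the a-matching\<close>

definition dist_a :: "nat \<Rightarrow> edge set \<Rightarrow> nat" where
  "dist_a n X = card ((X - a_edges n) \<union> (a_edges n - X))"

lemma card_symdiff_toggle:
  fixes X A :: "'a set"
  assumes "finite X" "finite A" "e \<in> (X - A) \<union> (A - X)"
    and "(Y - A) \<union> (A - Y) = ((X - A) \<union> (A - X)) - {e}"
  shows "card ((Y - A) \<union> (A - Y)) < card ((X - A) \<union> (A - X))"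
proof -
  have "finite ((X - A) \<union> (A - X))" using assms(1,2) by simp
  from card_Diff1_less[OF this assms(3)] show ?thesis using assms(4) by simp
qed

lemma delete_move:
  assumes X: "X \<in> one_two_configs n" and f: "f \<in> X"
    and d2: "\<And>v. v \<in> hc_ends n f \<Longrightarrow> hc_deg n X v = 2"
  shows "X - {f} \<in> one_two_configs n" "one_edge_apart n X (X - {f})"
proof -
  have XE: "X \<subseteq> hc_edges n" and finX: "finite X"
    and degs: "\<And>v. v \<in> hc_vertices n \<Longrightarrow> hc_deg n X v = 1 \<or> hc_deg n X v = 2"
    using config_facts[OF X] by auto
  show "X - {f} \<in> one_two_configs n"
    using XE degs d2 deg_remove[OF f finX] by (auto simp: one_two_configs_def)
  show "one_edge_apart n X (X - {f})" using f XE by (auto simp: one_edge_apart_def)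
qed

lemma add_move:
  assumes X: "X \<in> one_two_configs n" and e: "e \<in> hc_edges n" "e \<notin> X"
    and d1: "\<And>v. v \<in> hc_ends n e \<Longrightarrow> hc_deg n X v = 1"
  shows "insert e X \<in> one_two_configs n" "one_edge_apart n X (insert e X)"
proof -
  have XE: "X \<subseteq> hc_edges n" and finX: "finite X"
    and degs: "\<And>v. v \<in> hc_vertices n \<Longrightarrow> hc_deg n X v = 1 \<or> hc_deg n X v = 2"
    using config_facts[OF X] by auto
  show "insert e X \<in> one_two_configs n"
    using XE e degs d1 deg_insert[OF e(2) finX] by (auto simp: one_two_configs_def)
  show "one_edge_apart n X (insert e X)" using e by (auto simp: one_edge_apart_def)
qed

text \<open>Every configuration other than the a-matching has a neighbour strictly closer
  to it: otherwise it would be blocked, hence equal to the a-matching.\<close>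
lemma improving_move:
  assumes n1: "n \<ge> 1" and X: "X \<in> one_two_configs n" and ne: "X \<noteq> a_edges n"
  shows "\<exists>Y \<in> one_two_configs n. one_edge_apart n X Y \<and> dist_a n Y < dist_a n X"
proof (rule ccontr)
  assume no_move: "\<not> ?thesis"
  have XE: "X \<subseteq> hc_edges n" and finX: "finite X"
    and degs: "\<And>v. v \<in> hc_vertices n \<Longrightarrow> hc_deg n X v = 1 \<or> hc_deg n X v = 2"
    using config_facts[OF X] by auto
  have finA: "finite (a_edges n)" using finite_hc_edges by (simp add: a_edges_def)
  have "\<exists>v \<in> hc_ends n f. hc_deg n X v = 1" if f: "f \<in> X" "snd (snd f) \<noteq> EA" for f
  proof (rule ccontr)
    assume "\<not> ?thesis"
    then have "\<And>v. v \<in> hc_ends n f \<Longrightarrow> hc_deg n X v = 2"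
      using degs ends_in_vertices[OF n1] XE f(1) by blast
    note move = delete_move[OF X f(1) this]
    have "dist_a n (X - {f}) < dist_a n X"
      unfolding dist_a_def
      by (rule card_symdiff_toggle[OF finX finA, of f]) (use f in \<open>auto simp: a_edges_def\<close>)
    then show False using move no_move by blast
  qed
  moreover have "hc_deg n X v = 2 \<or> hc_deg n X (partner v) = 2"
    if v: "v \<in> hc_vertices n" "a_edge v \<notin> X" for v
  proof (rule ccontr)
    assume "\<not> ?thesis"
    then have d1: "\<And>w. w \<in> hc_ends n (a_edge v) \<Longrightarrow> hc_deg n X w = 1"
      using degs v(1) a_edge_facts[OF v(1)] by auto
    have aE: "a_edge v \<in> a_edges n" "a_edge v \<in> hc_edges n"
      using a_edge_facts(1)[OF v(1)] by (auto simp: a_edges_def)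
    note move = add_move[OF X aE(2) v(2) d1]
    have "dist_a n (insert (a_edge v) X) < dist_a n X"
      unfolding dist_a_def
      by (rule card_symdiff_toggle[OF finX finA, of "a_edge v"]) (use v aE in auto)
    then show False using move no_move by blast
  qed
  ultimately have "X = a_edges n" using blocked_is_a_edges[OF n1 X] by blast
  then show False using ne by contradiction
qed

abbreviation config_step :: "nat \<Rightarrow> edge set \<Rightarrow> edge set \<Rightarrow> bool" where
  "config_step n U V \<equiv>
     U \<in> one_two_configs n \<and> V \<in> one_two_configs n \<and> one_edge_apart n U V"

lemma reaches_a_edges:
  assumes n1: "n \<ge> 1" and X: "X \<in> one_two_configs n"
  shows "(config_step n)\<^sup>*\<^sup>* X (a_edges n)"
  using X
proof (induction "dist_a n X" arbitrary: X rule: less_induct)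
  case less
  show ?case
  proof (cases "X = a_edges n")
    case False
    then obtain Y where Y: "Y \<in> one_two_configs n" "one_edge_apart n X Y" "dist_a n Y < dist_a n X"
      using improving_move[OF n1 less.prems] by blast
    then show ?thesis
      using less.hyps[OF Y(3) Y(1)] less.prems by (auto intro: converse_rtranclp_into_rtranclp)
  qed simp
qed

text \<open>Adding and deleting an edge are inverse moves.\<close>
lemma config_step_symmetric: "(config_step n)\<inverse>\<inverse> = config_step n"
  unfolding one_edge_apart_def by (auto simp: fun_eq_iff)

lemma configs_connected:
  assumes "n \<ge> 1" "X \<in> one_two_configs n" "Y \<in> one_two_configs n"
  shows "(config_step n)\<^sup>*\<^sup>* X Y"
proof -
  have "(config_step n)\<inverse>\<inverse>\<^sup>*\<^sup>* (a_edges n) Y"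
    using reaches_a_edges[OF assms(1,3)] by (rule rtranclp_converseI)
  then have "(config_step n)\<^sup>*\<^sup>* (a_edges n) Y" by (simp only: config_step_symmetric)
  with reaches_a_edges[OF assms(1,2)] show ?thesis by simp
qed

theorem proposition7p1:
  fixes n :: nat and P :: "edge set \<Rightarrow> edge set \<Rightarrow> real"
  assumes "n \<ge> 1"
    and "\<And>X Y. X \<in> one_two_configs n \<Longrightarrow> Y \<in> one_two_configs n \<Longrightarrow>
                 one_edge_apart n X Y \<Longrightarrow> P X Y > 0"
  shows "(\<forall>X \<in> one_two_configs n. \<forall>Y \<in> one_two_configs n.
            (\<lambda>U V. U \<in> one_two_configs n \<and> V \<in> one_two_configs n \<and> one_edge_apart n U V)\<^sup>*\<^sup>* X Y)
       \<and> (\<forall>X \<in> one_two_configs n. \<forall>Y \<in> one_two_configs n.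
            (\<lambda>U V. U \<in> one_two_configs n \<and> V \<in> one_two_configs n \<and> P U V > 0)\<^sup>*\<^sup>* X Y)"
proof -
  let ?Q = "\<lambda>U V. U \<in> one_two_configs n \<and> V \<in> one_two_configs n \<and> P U V > 0"
  have connected: "\<forall>X \<in> one_two_configs n. \<forall>Y \<in> one_two_configs n. (config_step n)\<^sup>*\<^sup>* X Y"
    using configs_connected[OF assms(1)] by blast
  have "(config_step n)\<^sup>*\<^sup>* \<le> ?Q\<^sup>*\<^sup>*"
    by (rule rtranclp_mono) (use assms(2) in auto)
  with connected show ?thesis by (auto simp: le_fun_def)
qed

end
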